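(* Let $f\colon\tilde M\to\mathbb H$ be a minimal surface with conjugate $f^*$, and let $\gamma\in\pi_1(M)$ act with $\gamma^*f=f+\tau$, $\gamma^*f^*=f^*+\tau^*$, where $\tau=(\tau_0,\tau_1,\tau_2,\tau_3)$, $\tau^*=(\tau_0^*,\tau_1^*,\tau_2^*,\tau_3^* )\in\mathbb R^4$. Let $\mu\in\mathbb C\setminus\{0,1\}$, $s=-\ln|\mu|$, $t\in\mathbb R$ with $e^{s+it}=\frac{\bar\mu-1}{\bar\mu(1-\mu)}$. Then the simple factor dressing $f^\mu$ with parameter $\mu$ satisfies $\gamma^*f^\mu=f^\mu+\tau^\mu$ with $$\tau^\mu=\begin{pmatrix}\tau_0\\ \tau_1\\ \cos t\,(\tau_2\cosh s-\tau_3^*\sinh s)-\sin t\,(\tau_3\cosh s+\tau_2^*\sinh s)\\ \sin t\,(\tau_2\cosh s-\tau_3^*\sinh s)+\cos t\,(\tau_3\cosh s+\tau_2^*\sinh s)\end{pmatrix}.$$ In particular $\gamma^*f^\mu=f^\mu$ if and only if $\tau_0=\tau_1=0$ and $(\tau_2,\tau_3)=(\tau_3^*,-\tau_2^* )\tanh s$.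
   Context: Quaternions $\mathbb H=\mathbb R^4$ with basis $1,i,j,k$, $\mathbb C=\operatorname{span}_{\mathbb R}\{1,i\}$. Conjugate surface: $df^*=-*df$. Simple factor dressing with parameter $\mu$: with $a=\frac{\mu+\mu^{-1}}2$, $b=i\frac{\mu^{-1}-\mu}2$, $f^\mu=-f\frac{a-1}2+f^*\frac b2-\frac{b}{a-1}\big(f\frac b2+f^*\frac{a-1}2\big)$. *)

theory Defs
  imports "HOL-Analysis.Analysis"
begin

text \<open>Quaternions H = R^4 with basis 1, i, j, k; components of x are
  x$1 (real part), x$2 (i), x$3 (j), x$4 (k).\<close>

type_synonym quat = "real ^ 4"

definition quat :: "real \<Rightarrow> real \<Rightarrow> real \<Rightarrow> real \<Rightarrow> quat" where
  "quat a b c d = vector [a, b, c, d]"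

definition qmult :: "quat \<Rightarrow> quat \<Rightarrow> quat" (infixl "\<cdot>\<^sub>H" 70) where
  "p \<cdot>\<^sub>H q = quat
     (p$1*q$1 - p$2*q$2 - p$3*q$3 - p$4*q$4)
     (p$1*q$2 + p$2*q$1 + p$3*q$4 - p$4*q$3)
     (p$1*q$3 - p$2*q$4 + p$3*q$1 + p$4*q$2)
     (p$1*q$4 + p$2*q$3 - p$3*q$2 + p$4*q$1)"

definition cq :: "complex \<Rightarrow> quat" where
  "cq z = quat (Re z) (Im z) 0 0"

definition sfd_a :: "complex \<Rightarrow> complex" where "sfd_a \<mu> = (\<mu> + inverse \<mu>) / 2"
definition sfd_b :: "complex \<Rightarrow> complex" where "sfd_b \<mu> = \<i> * (inverse \<mu> - \<mu>) / 2"

definition simple_factor_dressing ::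
  "complex \<Rightarrow> ('a \<Rightarrow> quat) \<Rightarrow> ('a \<Rightarrow> quat) \<Rightarrow> 'a \<Rightarrow> quat" where
  "simple_factor_dressing \<mu> f fs p =
     (let a = sfd_a \<mu>; b = sfd_b \<mu> in
        - (f p \<cdot>\<^sub>H cq ((a - 1) / 2)) + fs p \<cdot>\<^sub>H cq (b / 2)
        - cq (b / (a - 1)) \<cdot>\<^sub>H (f p \<cdot>\<^sub>H cq (b / 2) + fs p \<cdot>\<^sub>H cq ((a - 1) / 2)))"

text \<open>Partial derivatives w.r.t. x and y, where z = x + i y is a conformal
  coordinate on the universal cover (modelled as a domain U in C).\<close>
definition px :: "(complex \<Rightarrow> quat) \<Rightarrow> complex \<Rightarrow> quat" where
  "px f z = frechet_derivative f (at z) 1"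
definition py :: "(complex \<Rightarrow> quat) \<Rightarrow> complex \<Rightarrow> quat" where
  "py f z = frechet_derivative f (at z) \<i>"

definition conformal_immersion :: "complex set \<Rightarrow> (complex \<Rightarrow> quat) \<Rightarrow> bool" where
  "conformal_immersion U f \<longleftrightarrow> (\<forall>z\<in>U. f differentiable (at z) \<and>
      px f z \<noteq> 0 \<and> norm (px f z) = norm (py f z) \<and> px f z \<bullet> py f z = 0)"

definition harmonic_on :: "complex set \<Rightarrow> (complex \<Rightarrow> quat) \<Rightarrow> bool" where
  "harmonic_on U f \<longleftrightarrow> (\<forall>z\<in>U. f differentiable (at z) \<and>
      px f differentiable (at z) \<and> py f differentiable (at z) \<and>
      px (px f) z + py (py f) z = 0)"

definition minimal_surface :: "complex set \<Rightarrow> (complex \<Rightarrow> quat) \<Rightarrow> bool" where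
  "minimal_surface U f \<longleftrightarrow> conformal_immersion U f \<and> harmonic_on U f"

text \<open>Conjugate surface: d fs = - * df, with *dx = dy, *dy = -dx, i.e.
  fs_x = f_y and fs_y = - f_x.\<close>
definition conjugate_surface :: "complex set \<Rightarrow> (complex \<Rightarrow> quat) \<Rightarrow> (complex \<Rightarrow> quat) \<Rightarrow> bool" where
  "conjugate_surface U f fs \<longleftrightarrow> (\<forall>z\<in>U. fs differentiable (at z) \<and>
      px fs z = py f z \<and> py fs z = - px f z)"

end

theory Submission imports Defs begin

(* The simple factor dressing is built from f and its conjugate fs by real-linear
   operations (right and left multiplication with complex constants).  Hence it maps
   the translation periods (tau, tau* ) of (f, fs) to the period of f^mu by one fixed
   real-linear map of H x H, the dressing map.  We compute this map in the splitting
   H = C + C j, q = cpart q + jpart q j: right multiplication by c in C acts as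
   (c, cnj c) on the two components and left multiplication as (c, c), so the dressing
   map is a pair of C-linear expressions whose coefficients are rational in mu and
   cnj mu (lemma dressing_coefficients).  The C-component is the identity on tau, and
   the j-component becomes a rotation by t of (cosh s tau + i sinh s tau* ) once
   |mu| = e^(-s) and e^(s+it) = (cnj mu - 1)/(cnj mu (1 - mu)) are inserted
   (lemma dressing_polar).  The main theorem is then the translation law of the
   dressing together with the elementary description of when the period vanishes. *)

lemma quat_nth [simp]:
  "quat a b c d $ 1 = a" "quat a b c d $ 2 = b" "quat a b c d $ 3 = c" "quat a b c d $ 4 = d"
  by (simp_all add: quat_def vector_def)

text \<open>The two complex components of a quaternion q = cpart q + jpart q j.\<close>
definition cpart :: "quat \<Rightarrow> complex" where "cpart q = Complex (q$1) (q$2)"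
definition jpart :: "quat \<Rightarrow> complex" where "jpart q = Complex (q$3) (q$4)"

lemma quat_eq_iff_parts: "p = q \<longleftrightarrow> cpart p = cpart q \<and> jpart p = jpart q"
  by (auto simp: cpart_def jpart_def vec_eq_iff forall_4 complex_eq_iff)

lemma parts_add [simp]: "cpart (p + q) = cpart p + cpart q" "jpart (p + q) = jpart p + jpart q"
  by (simp_all add: cpart_def jpart_def complex_eq_iff)

lemma parts_diff [simp]: "cpart (p - q) = cpart p - cpart q" "jpart (p - q) = jpart p - jpart q"
  by (simp_all add: cpart_def jpart_def complex_eq_iff)

lemma parts_uminus [simp]: "cpart (- q) = - cpart q" "jpart (- q) = - jpart q"
  by (simp_all add: cpart_def jpart_def complex_eq_iff)

text \<open>Right multiplication by c \<in> C conjugates c on the j-component (since j c = cnj c j),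
  left multiplication acts as scalar multiplication on both components.\<close>
lemma parts_mult_cq [simp]:
  "cpart (p \<cdot>\<^sub>H cq c) = cpart p * c" "jpart (p \<cdot>\<^sub>H cq c) = jpart p * cnj c"
  by (simp_all add: cpart_def jpart_def complex_eq_iff qmult_def cq_def algebra_simps)

lemma parts_cq_mult [simp]:
  "cpart (cq c \<cdot>\<^sub>H p) = c * cpart p" "jpart (cq c \<cdot>\<^sub>H p) = c * jpart p"
  by (simp_all add: cpart_def jpart_def complex_eq_iff qmult_def cq_def algebra_simps)

lemma parts_zero [simp]: "cpart 0 = 0" "jpart 0 = 0"
  by (simp_all add: cpart_def jpart_def complex_eq_iff)

lemma parts_quat [simp]: "cpart (quat a b c d) = Complex a b" "jpart (quat a b c d) = Complex c d"
  by (simp_all add: cpart_def jpart_def)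

definition dressing_map :: "complex \<Rightarrow> quat \<Rightarrow> quat \<Rightarrow> quat" where
  "dressing_map \<mu> x y =
     (let a = sfd_a \<mu>; b = sfd_b \<mu> in
        - (x \<cdot>\<^sub>H cq ((a - 1) / 2)) + y \<cdot>\<^sub>H cq (b / 2)
        - cq (b / (a - 1)) \<cdot>\<^sub>H (x \<cdot>\<^sub>H cq (b / 2) + y \<cdot>\<^sub>H cq ((a - 1) / 2)))"

lemma simple_factor_dressing_eq: "simple_factor_dressing \<mu> f fs p = dressing_map \<mu> (f p) (fs p)"
  by (simp add: simple_factor_dressing_def dressing_map_def)

lemma qmult_add_distrib:
  "(p + q) \<cdot>\<^sub>H r = p \<cdot>\<^sub>H r + q \<cdot>\<^sub>H r" "r \<cdot>\<^sub>H (p + q) = r \<cdot>\<^sub>H p + r \<cdot>\<^sub>H q"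
  by (simp_all add: quat_eq_iff_parts cpart_def jpart_def qmult_def complex_eq_iff algebra_simps)

lemma dressing_map_add:
  "dressing_map \<mu> (x + x') (y + y') = dressing_map \<mu> x y + dressing_map \<mu> x' y'"
  by (simp add: dressing_map_def Let_def qmult_add_distrib algebra_simps)

lemma simple_factor_dressing_translate:
  assumes "f (\<gamma> p) = f p + \<tau>" "fs (\<gamma> p) = fs p + \<tau>s"
  shows "simple_factor_dressing \<mu> f fs (\<gamma> p) = simple_factor_dressing \<mu> f fs p + dressing_map \<mu> \<tau> \<tau>s"
  by (simp add: assms simple_factor_dressing_eq dressing_map_add)

text \<open>The rational identities behind the dressing map, with n standing for cnj m
  (they hold for independent m and n).  The first two say that the C-component of
  the dressing map is the identity on x; the last two give its j-component.\<close>
lemma dressing_coefficients: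
  fixes m n :: complex
  assumes "m \<noteq> 0" "m \<noteq> 1" "n \<noteq> 0"
  defines "a \<equiv> (m + inverse m) / 2" and "b \<equiv> \<i> * (inverse m - m) / 2"
    and "a' \<equiv> (n + inverse n) / 2" and "b' \<equiv> - \<i> * (inverse n - n) / 2"
    and "w \<equiv> (n - 1) / (n * (1 - m))"
  shows "- ((a - 1) / 2) - b / (a - 1) * (b / 2) = 1"
    and "b / 2 - b / (a - 1) * ((a - 1) / 2) = 0"
    and "- ((a' - 1) / 2) - b / (a - 1) * (b' / 2) = w * (1 + m * n) / 2"
    and "b' / 2 - b / (a - 1) * ((a' - 1) / 2) = \<i> * (w * (1 - m * n) / 2)"
proof -
  have m1: "m - 1 \<noteq> 0" "1 - m \<noteq> 0" using assms(2) by auto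
  have a1: "a - 1 = (m - 1)^2 / (2 * m)"
    using assms(1) by (simp add: a_def field_simps power2_eq_square)
  have ba: "b / (a - 1) = - \<i> * (m + 1) / (m - 1)"
    using assms(1) m1 unfolding a1 by (simp add: b_def field_simps; simp add: algebra_simps power2_eq_square)
  show "- ((a - 1) / 2) - b / (a - 1) * (b / 2) = 1"
    using assms(1) m1 unfolding ba by (simp add: a_def b_def field_simps; simp add: algebra_simps power2_eq_square)
  show "b / 2 - b / (a - 1) * ((a - 1) / 2) = 0"
    using a1 assms(1) m1 by simp
  show "- ((a' - 1) / 2) - b / (a - 1) * (b' / 2) = w * (1 + m * n) / 2"
    using assms(1,3) m1 unfolding ba by (simp add: a'_def b'_def w_def field_simps; simp add: algebra_simps)
  show "b' / 2 - b / (a - 1) * ((a' - 1) / 2) = \<i> * (w * (1 - m * n) / 2)"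
    using assms(1,3) m1 unfolding ba by (simp add: a'_def b'_def w_def field_simps; simp add: algebra_simps)
qed

lemma dressing_map_parts:
  assumes "\<mu> \<noteq> 0" "\<mu> \<noteq> 1"
  defines "w \<equiv> (cnj \<mu> - 1) / (cnj \<mu> * (1 - \<mu>))"
  shows "cpart (dressing_map \<mu> x y) = cpart x"
    and "jpart (dressing_map \<mu> x y) =
           jpart x * (w * (1 + of_real ((cmod \<mu>)\<^sup>2)) / 2) + jpart y * (\<i> * (w * (1 - of_real ((cmod \<mu>)\<^sup>2)) / 2))"
proof -
  have n0: "cnj \<mu> \<noteq> 0" using assms(1) by simp
  have norm2: "\<mu> * cnj \<mu> = of_real ((cmod \<mu>)\<^sup>2)" by (metis complex_norm_square of_real_power)
  note coeff = dressing_coefficients[OF assms(1,2) n0, folded w_def, unfolded norm2]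
  define c1 c2 c3 where "c1 = (sfd_a \<mu> - 1) / 2" and "c2 = sfd_b \<mu> / 2"
    and "c3 = sfd_b \<mu> / (sfd_a \<mu> - 1)"
  have conj_coeffs: "cnj c1 = ((cnj \<mu> + inverse (cnj \<mu>)) / 2 - 1) / 2"
    "cnj c2 = - \<i> * (inverse (cnj \<mu>) - cnj \<mu>) / 2 / 2"
    by (simp_all add: c1_def c2_def sfd_a_def sfd_b_def)
  have "cpart (dressing_map \<mu> x y) = - (cpart x * c1) + cpart y * c2 - c3 * (cpart x * c2 + cpart y * c1)"
    by (simp add: dressing_map_def Let_def c1_def c2_def c3_def)
  also have "\<dots> = cpart x * (- c1 - c3 * c2) + cpart y * (c2 - c3 * c1)"
    by (simp add: algebra_simps)
  also have "\<dots> = cpart x"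
    unfolding c1_def c2_def c3_def sfd_a_def sfd_b_def coeff(1,2) by simp
  finally show "cpart (dressing_map \<mu> x y) = cpart x" .
  have "jpart (dressing_map \<mu> x y) =
          - (jpart x * cnj c1) + jpart y * cnj c2 - c3 * (jpart x * cnj c2 + jpart y * cnj c1)"
    by (simp add: dressing_map_def Let_def c1_def c2_def c3_def)
  also have "\<dots> = jpart x * (- cnj c1 - c3 * cnj c2) + jpart y * (cnj c2 - c3 * cnj c1)"
    by (simp add: algebra_simps)
  also have "\<dots> =
      jpart x * (w * (1 + of_real ((cmod \<mu>)\<^sup>2)) / 2) + jpart y * (\<i> * (w * (1 - of_real ((cmod \<mu>)\<^sup>2)) / 2))"
    unfolding conj_coeffs c3_def sfd_a_def sfd_b_def coeff(3,4) ..
  finally show "jpart (dressing_map \<mu> x y) =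
      jpart x * (w * (1 + of_real ((cmod \<mu>)\<^sup>2)) / 2) + jpart y * (\<i> * (w * (1 - of_real ((cmod \<mu>)\<^sup>2)) / 2))" .
qed

lemma dressing_polar:
  fixes \<mu> w :: complex and s t :: real
  assumes "\<mu> \<noteq> 0" and "s = - ln (cmod \<mu>)" and "exp (of_real s + \<i> * of_real t) = w"
  shows "w * (1 + of_real ((cmod \<mu>)\<^sup>2)) / 2 = cis t * of_real (cosh s)"
    and "w * (1 - of_real ((cmod \<mu>)\<^sup>2)) / 2 = cis t * of_real (sinh s)"
proof -
  define r where "r = cmod \<mu>"
  have r0: "r > 0" using assms(1) by (simp add: r_def)
  have exp_s: "exp s = inverse r" "exp (- s) = r"
    using r0 by (simp_all add: assms(2) r_def exp_minus)
  have w: "w = of_real (inverse r) * cis t"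
    using assms(3) exp_s(1) by (simp add: exp_add cis_conv_exp exp_of_real)
  show "w * (1 + of_real ((cmod \<mu>)\<^sup>2)) / 2 = cis t * of_real (cosh s)"
    unfolding w cosh_def exp_s r_def[symmetric] using r0 by (simp add: field_simps power2_eq_square)
  show "w * (1 - of_real ((cmod \<mu>)\<^sup>2)) / 2 = cis t * of_real (sinh s)"
    unfolding w sinh_def exp_s r_def[symmetric] using r0 by (simp add: field_simps power2_eq_square)
qed

text \<open>The dressed period: the C-component of \<tau> is kept, the j-component is
  cis t (cosh s jpart \<tau> + i sinh s jpart \<tau>s), written out in real coordinates.\<close>
lemma dressed_period:
  assumes "\<mu> \<noteq> 0" "\<mu> \<noteq> 1" "s = - ln (cmod \<mu>)"
    and "exp (of_real s + \<i> * of_real t) = (cnj \<mu> - 1) / (cnj \<mu> * (1 - \<mu>))"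
  shows "dressing_map \<mu> \<tau> \<tau>s = quat (\<tau>$1) (\<tau>$2)
           (cos t * (\<tau>$3 * cosh s - \<tau>s$4 * sinh s) - sin t * (\<tau>$4 * cosh s + \<tau>s$3 * sinh s))
           (sin t * (\<tau>$3 * cosh s - \<tau>s$4 * sinh s) + cos t * (\<tau>$4 * cosh s + \<tau>s$3 * sinh s))"
proof -
  note polar = dressing_polar[OF assms(1,3,4)]
  have "jpart (dressing_map \<mu> \<tau> \<tau>s) =
          cis t * (of_real (cosh s) * jpart \<tau> + \<i> * of_real (sinh s) * jpart \<tau>s)"
    unfolding dressing_map_parts(2)[OF assms(1,2)] polar by (simp add: algebra_simps)
  then show ?thesis
    by (simp add: quat_eq_iff_parts dressing_map_parts(1)[OF assms(1,2)])
       (simp add: cpart_def jpart_def complex_eq_iff algebra_simps)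
qed

text \<open>When the dressed period vanishes: since rotation by t is invertible and
  cosh s > 0, exactly when \<tau> has no C-part and (\<tau>$3, \<tau>$4) = (\<tau>s$4, -\<tau>s$3) tanh s.\<close>
lemma dressed_period_eq_0_iff:
  fixes s t :: real and \<tau> \<tau>s :: quat
  shows "quat (\<tau>$1) (\<tau>$2)
           (cos t * (\<tau>$3 * cosh s - \<tau>s$4 * sinh s) - sin t * (\<tau>$4 * cosh s + \<tau>s$3 * sinh s))
           (sin t * (\<tau>$3 * cosh s - \<tau>s$4 * sinh s) + cos t * (\<tau>$4 * cosh s + \<tau>s$3 * sinh s)) = 0
         \<longleftrightarrow> \<tau>$1 = 0 \<and> \<tau>$2 = 0 \<and> \<tau>$3 = \<tau>s$4 * tanh s \<and> \<tau>$4 = - \<tau>s$3 * tanh s"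
    (is "?Q = 0 \<longleftrightarrow> _")
proof -
  define v where "v = of_real (cosh s) * jpart \<tau> + \<i> * of_real (sinh s) * jpart \<tau>s"
  have "cpart ?Q = cpart \<tau>" "jpart ?Q = cis t * v"
    by (simp_all add: v_def cpart_def jpart_def complex_eq_iff algebra_simps)
  then have "?Q = 0 \<longleftrightarrow> cpart \<tau> = 0 \<and> v = 0"
    by (simp add: quat_eq_iff_parts[of ?Q 0] cis_neq_zero del: parts_quat)
  also have "\<dots> \<longleftrightarrow> \<tau>$1 = 0 \<and> \<tau>$2 = 0 \<and> \<tau>$3 = \<tau>s$4 * tanh s \<and> \<tau>$4 = - \<tau>s$3 * tanh s"
    using cosh_real_pos[of s]
    by (auto simp: v_def cpart_def jpart_def complex_eq_iff tanh_def field_simps)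
  finally show ?thesis .
qed

theorem mainTheorem15:
  fixes U :: "complex set" and f fs :: "complex \<Rightarrow> quat" and \<gamma> :: "complex \<Rightarrow> complex"
    and \<tau> \<tau>s :: quat and \<mu> :: complex and s t :: real
  assumes U: "open U" "connected U" "simply_connected U" "U \<noteq> {}"
    and minimal: "minimal_surface U f"
    and conj: "conjugate_surface U f fs"
    and deck: "\<gamma> holomorphic_on U" "bij_betw \<gamma> U U"
    and per: "\<forall>z\<in>U. f (\<gamma> z) = f z + \<tau>" "\<forall>z\<in>U. fs (\<gamma> z) = fs z + \<tau>s"
    and mu: "\<mu> \<noteq> 0" "\<mu> \<noteq> 1"
    and s_def: "s = - ln (cmod \<mu>)"
    and t_def: "exp (complex_of_real s + \<i> * complex_of_real t) = (cnj \<mu> - 1) / (cnj \<mu> * (1 - \<mu>))"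
  shows "(\<forall>z\<in>U. simple_factor_dressing \<mu> f fs (\<gamma> z) = simple_factor_dressing \<mu> f fs z +
            quat (\<tau>$1) (\<tau>$2)
              (cos t * (\<tau>$3 * cosh s - \<tau>s$4 * sinh s) - sin t * (\<tau>$4 * cosh s + \<tau>s$3 * sinh s))
              (sin t * (\<tau>$3 * cosh s - \<tau>s$4 * sinh s) + cos t * (\<tau>$4 * cosh s + \<tau>s$3 * sinh s)))
       \<and> ((\<forall>z\<in>U. simple_factor_dressing \<mu> f fs (\<gamma> z) = simple_factor_dressing \<mu> f fs z) \<longleftrightarrow>
            (\<tau>$1 = 0 \<and> \<tau>$2 = 0 \<and> \<tau>$3 = \<tau>s$4 * tanh s \<and> \<tau>$4 = - \<tau>s$3 * tanh s))"
proof -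
  have translate: "simple_factor_dressing \<mu> f fs (\<gamma> z) = simple_factor_dressing \<mu> f fs z + dressing_map \<mu> \<tau> \<tau>s"
    if "z \<in> U" for z
    using per that by (simp add: simple_factor_dressing_translate)
  have invariant_iff: "(\<forall>z\<in>U. simple_factor_dressing \<mu> f fs (\<gamma> z) = simple_factor_dressing \<mu> f fs z)
                        \<longleftrightarrow> dressing_map \<mu> \<tau> \<tau>s = 0"
    using translate U(4) by auto
  show ?thesis
    using translate invariant_iff dressed_period[OF mu s_def t_def] dressed_period_eq_0_iff
    by simp
qed

end
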